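(* Let $G$ be a connected graph, $(u,v)\in V_p$ and $w\in V(G)$. Then $r_w(u,v)=\frac12$ if and only if $w\in\{u,v\}$ and $V_i(u)\setminus\{v\}=V_i(v)\setminus\{u\}$ for every $1\le i\le\mathrm{diam}(G)$, where $V_i(x)=\{y\in V(G)\setminus\{x\}: d(x,y)=i\}$.
   Context: Graphs are finite, simple and connected; $d(u,v)$ denotes the shortest-path distance. $V_p$ denotes the set of all unordered pairs $(u,v)$ of distinct vertices. A vertex $x$ resolves the pair $(u,v)$ if $d(x,u)\neq d(x,v)$. For $(u,v)\in V_p$, $R(u,v)$ is the set of all vertices resolving $(u,v)$. The resolving share of a vertex $w$ for $(u,v)$ is $r_w(u,v)=\frac{1}{|R(u,v)|}$ if $w$ resolves $u$ and $v$, and $r_w(u,v)=0$ otherwise. *)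

theory Defs
  imports Main "HOL-Library.Extended_Nat" Complex_Main
begin

definition simple_graph :: "'a set \<Rightarrow> ('a \<Rightarrow> 'a \<Rightarrow> bool) \<Rightarrow> bool" where
  "simple_graph V E \<longleftrightarrow> finite V \<and> (\<forall>x y. E x y \<longrightarrow> x \<in> V \<and> y \<in> V)
     \<and> (\<forall>x y. E x y \<longrightarrow> E y x) \<and> (\<forall>x. \<not> E x x)"

definition walk :: "'a set \<Rightarrow> ('a \<Rightarrow> 'a \<Rightarrow> bool) \<Rightarrow> 'a list \<Rightarrow> bool" where
  "walk V E xs \<longleftrightarrow> xs \<noteq> [] \<and> set xs \<subseteq> V \<and> (\<forall>i. Suc i < length xs \<longrightarrow> E (xs ! i) (xs ! Suc i))"

definition connected_graph :: "'a set \<Rightarrow> ('a \<Rightarrow> 'a \<Rightarrow> bool) \<Rightarrow> bool" where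
  "connected_graph V E \<longleftrightarrow> V \<noteq> {} \<and>
     (\<forall>u\<in>V. \<forall>v\<in>V. \<exists>xs. walk V E xs \<and> hd xs = u \<and> last xs = v)"

text \<open>Shortest-path distance (meaningful for connected graphs).\<close>

definition gdist :: "'a set \<Rightarrow> ('a \<Rightarrow> 'a \<Rightarrow> bool) \<Rightarrow> 'a \<Rightarrow> 'a \<Rightarrow> nat" where
  "gdist V E u v = (LEAST n. \<exists>xs. walk V E xs \<and> hd xs = u \<and> last xs = v \<and> length xs = Suc n)"

definition diam :: "'a set \<Rightarrow> ('a \<Rightarrow> 'a \<Rightarrow> bool) \<Rightarrow> nat" where
  "diam V E = Max {gdist V E x y | x y. x \<in> V \<and> y \<in> V}"

definition resolves :: "'a set \<Rightarrow> ('a \<Rightarrow> 'a \<Rightarrow> bool) \<Rightarrow> 'a \<Rightarrow> 'a \<Rightarrow> 'a \<Rightarrow> bool" where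
  "resolves V E x u v \<longleftrightarrow> gdist V E x u \<noteq> gdist V E x v"

definition resolving_set :: "'a set \<Rightarrow> ('a \<Rightarrow> 'a \<Rightarrow> bool) \<Rightarrow> 'a \<Rightarrow> 'a \<Rightarrow> 'a set" where
  "resolving_set V E u v = {x \<in> V. resolves V E x u v}"

definition resolving_share :: "'a set \<Rightarrow> ('a \<Rightarrow> 'a \<Rightarrow> bool) \<Rightarrow> 'a \<Rightarrow> 'a \<Rightarrow> 'a \<Rightarrow> real" where
  "resolving_share V E w u v =
     (if resolves V E w u v then 1 / real (card (resolving_set V E u v)) else 0)"

definition dist_layer :: "'a set \<Rightarrow> ('a \<Rightarrow> 'a \<Rightarrow> bool) \<Rightarrow> nat \<Rightarrow> 'a \<Rightarrow> 'a set" where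
  "dist_layer V E i x = {y \<in> V - {x}. gdist V E x y = i}"

end

theory Submission
  imports Defs
begin

text \<open>Both u and v resolve the pair (u,v), so the resolving share of w equals 1/2 exactly when
  w resolves the pair and u, v are its only resolvers. The latter says that every other vertex
  is equidistant from u and v, which is the same as the distance layers of u and v agreeing
  outside {u,v}.\<close>

lemma walk_rev:
  assumes "simple_graph V E" "walk V E xs"
  shows "walk V E (rev xs)"
proof -
  have sym: "\<And>x y. E x y \<Longrightarrow> E y x" using assms(1) by (simp add: simple_graph_def)
  have "E (rev xs ! i) (rev xs ! Suc i)" if i: "Suc i < length xs" for i
  proof -
    define j where "j = length xs - Suc (Suc i)"
    have j: "Suc j < length xs" "length xs - Suc i = Suc j" using i by (auto simp: j_def)
    then have "E (xs ! j) (xs ! Suc j)" using assms(2) by (simp add: walk_def)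
    moreover have "rev xs ! i = xs ! Suc j" "rev xs ! Suc i = xs ! j"
      using i j(2) by (auto simp: rev_nth j_def)
    ultimately show ?thesis using sym by simp
  qed
  then show ?thesis using assms(2) by (simp add: walk_def)
qed

lemma gdist_sym:
  assumes "simple_graph V E"
  shows "gdist V E u v = gdist V E v u"
proof -
  have rev_walk: "\<exists>ys. walk V E ys \<and> hd ys = b \<and> last ys = a \<and> length ys = n"
    if "walk V E xs" "hd xs = a" "last xs = b" "length xs = n" for xs a b n
  proof -
    have "xs \<noteq> []" using that(1) by (simp add: walk_def)
    then show ?thesis
      using that walk_rev[OF assms that(1)] by (intro exI[of _ "rev xs"]) (auto simp: hd_rev last_rev)
  qed
  have "(\<exists>xs. walk V E xs \<and> hd xs = u \<and> last xs = v \<and> length xs = Suc n)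
      \<longleftrightarrow> (\<exists>xs. walk V E xs \<and> hd xs = v \<and> last xs = u \<and> length xs = Suc n)" for n
    using rev_walk by blast
  then show ?thesis unfolding gdist_def by simp
qed

lemma gdist_attained:
  assumes "connected_graph V E" "u \<in> V" "v \<in> V"
  shows "\<exists>xs. walk V E xs \<and> hd xs = u \<and> last xs = v \<and> length xs = Suc (gdist V E u v)"
proof -
  obtain xs where xs: "walk V E xs" "hd xs = u" "last xs = v"
    using assms unfolding connected_graph_def by blast
  then have "length xs = Suc (length xs - 1)" by (simp add: walk_def)
  with xs have "\<exists>n xs. walk V E xs \<and> hd xs = u \<and> last xs = v \<and> length xs = Suc n" by blast
  then show ?thesis unfolding gdist_def by (rule LeastI_ex)
qed

lemma gdist_eq_0_iff:
  assumes "connected_graph V E" "u \<in> V" "v \<in> V"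
  shows "gdist V E u v = 0 \<longleftrightarrow> u = v"
proof
  assume "gdist V E u v = 0"
  then obtain xs where "hd xs = u" "last xs = v" "length xs = Suc 0"
    using gdist_attained[OF assms] by auto
  then show "u = v" by (cases xs) auto
next
  assume "u = v"
  moreover have "walk V E [u]" using assms(2) by (simp add: walk_def)
  ultimately show "gdist V E u v = 0"
    unfolding gdist_def by (intro Least_eq_0) (rule exI[of _ "[u]"], simp)
qed

lemma gdist_le_diam:
  assumes "finite V" "x \<in> V" "y \<in> V"
  shows "gdist V E x y \<le> diam V E"
proof -
  have "{gdist V E x y | x y. x \<in> V \<and> y \<in> V} = (\<lambda>(x, y). gdist V E x y) ` (V \<times> V)" by auto
  then have "finite {gdist V E x y | x y. x \<in> V \<and> y \<in> V}" using assms(1) by simp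
  then show ?thesis unfolding diam_def using assms(2,3) by (intro Max_ge) auto
qed

lemma endpoints_in_resolving_set:
  assumes "simple_graph V E" "connected_graph V E" "u \<in> V" "v \<in> V" "u \<noteq> v"
  shows "u \<in> resolving_set V E u v" "v \<in> resolving_set V E u v"
proof -
  have "gdist V E u u = 0" "gdist V E v v = 0" "gdist V E u v \<noteq> 0"
    using gdist_eq_0_iff[OF assms(2)] assms(3-5) by auto
  then show "u \<in> resolving_set V E u v" "v \<in> resolving_set V E u v"
    using assms(3,4) gdist_sym[OF assms(1), of u v] by (auto simp: resolving_set_def resolves_def)
qed

lemma resolving_set_eq_endpoints_iff:
  assumes "simple_graph V E" "connected_graph V E" "u \<in> V" "v \<in> V" "u \<noteq> v"
  shows "resolving_set V E u v = {u, v}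
     \<longleftrightarrow> (\<forall>x \<in> V - {u, v}. gdist V E u x = gdist V E v x)"
proof -
  have "x \<notin> resolving_set V E u v \<longleftrightarrow> gdist V E u x = gdist V E v x" if "x \<in> V" for x
    using that gdist_sym[OF assms(1), of x] by (auto simp: resolving_set_def resolves_def)
  moreover have "resolving_set V E u v \<subseteq> V" by (auto simp: resolving_set_def)
  ultimately show ?thesis using endpoints_in_resolving_set[OF assms] by blast
qed

lemma dist_layers_agree_iff:
  assumes "finite V" "connected_graph V E" "u \<in> V"
  shows "(\<forall>i. 1 \<le> i \<and> i \<le> diam V E \<longrightarrow> dist_layer V E i u - {v} = dist_layer V E i v - {u})
     \<longleftrightarrow> (\<forall>x \<in> V - {u, v}. gdist V E u x = gdist V E v x)"
proof
  assume layers: "\<forall>i. 1 \<le> i \<and> i \<le> diam V E \<longrightarrow> dist_layer V E i u - {v} = dist_layer V E i v - {u}"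
  show "\<forall>x \<in> V - {u, v}. gdist V E u x = gdist V E v x"
  proof
    fix x assume x: "x \<in> V - {u, v}"
    let ?i = "gdist V E u x"
    have "1 \<le> ?i" using gdist_eq_0_iff[OF assms(2,3), of x] x by auto
    moreover have "?i \<le> diam V E" using gdist_le_diam[OF assms(1,3)] x by blast
    ultimately have "dist_layer V E ?i u - {v} = dist_layer V E ?i v - {u}" using layers by blast
    moreover have "x \<in> dist_layer V E ?i u - {v}" using x by (simp add: dist_layer_def)
    ultimately show "gdist V E u x = gdist V E v x" by (simp add: dist_layer_def)
  qed
qed (auto simp: dist_layer_def)

lemma card_resolving_set_eq_2_iff:
  assumes "simple_graph V E" "connected_graph V E" "u \<in> V" "v \<in> V" "u \<noteq> v"
  shows "card (resolving_set V E u v) = 2 \<longleftrightarrow> resolving_set V E u v = {u, v}"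
proof -
  have "finite (resolving_set V E u v)"
    using assms(1) by (simp add: simple_graph_def resolving_set_def)
  moreover have "{u, v} \<subseteq> resolving_set V E u v" using endpoints_in_resolving_set[OF assms] by simp
  ultimately show ?thesis using assms(5) by (metis card_2_iff card_subset_eq finite.emptyI finite.insertI)
qed

lemma resolving_share_eq_half_iff:
  assumes "w \<in> V"
  shows "resolving_share V E w u v = 1/2
     \<longleftrightarrow> w \<in> resolving_set V E u v \<and> card (resolving_set V E u v) = 2"
proof -
  have "1 / real n = 1/2 \<longleftrightarrow> n = 2" for n :: nat by (simp add: divide_eq_eq)
  then show ?thesis using assms by (simp add: resolving_share_def resolving_set_def)
qed

theorem lemma2p5:
  fixes V :: "'a set" and E :: "'a \<Rightarrow> 'a \<Rightarrow> bool" and u v w :: 'a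
  assumes "simple_graph V E" and "connected_graph V E"
    and "u \<in> V" and "v \<in> V" and "u \<noteq> v" and "w \<in> V"
  shows "resolving_share V E w u v = 1/2 \<longleftrightarrow>
         (w \<in> {u, v} \<and>
          (\<forall>i. 1 \<le> i \<and> i \<le> diam V E \<longrightarrow>
               dist_layer V E i u - {v} = dist_layer V E i v - {u}))"
proof -
  have "finite V" using assms(1) by (simp add: simple_graph_def)
  have "resolving_share V E w u v = 1/2
      \<longleftrightarrow> w \<in> resolving_set V E u v \<and> resolving_set V E u v = {u, v}"
    using resolving_share_eq_half_iff[OF assms(6)] card_resolving_set_eq_2_iff[OF assms(1-5)] by simp
  also have "\<dots> \<longleftrightarrow> w \<in> {u, v} \<and> (\<forall>x \<in> V - {u, v}. gdist V E u x = gdist V E v x)"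
    using endpoints_in_resolving_set[OF assms(1-5)] resolving_set_eq_endpoints_iff[OF assms(1-5)]
    by blast
  finally show ?thesis using dist_layers_agree_iff[OF \<open>finite V\<close> assms(2,3)] by simp
qed

end
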